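(* Each brick and each brace of a cycle-extendable graph is cycle-extendable.
   Context: Graphs are loopless; multiple edges allowed. A graph is matching covered if it is connected, has at least two vertices, and every edge lies in some perfect matching; it is cycle-extendable if moreover for every even cycle $C$ the graph $G-V(C)$ has a perfect matching. For $X\subseteq V(G)$, $\partial(X)$ is the set of edges with exactly one end in $X$; it is a tight cut if every perfect matching contains exactly one edge of it, and nontrivial if both $X$ and $V(G)\setminus X$ have at least two vertices. The $\partial(X)$-contractions are obtained by shrinking $X$, respectively $V(G)\setminus X$, to a single vertex (keeping parallel edges). The bricks and braces of a matching covered graph are the graphs obtained by repeatedly replacing a graph having a nontrivial tight cut by its two cut-contractions until no nontrivial tight cuts remain: the resulting nonbipartite graphs are its bricks and the bipartite ones its braces. *)

theory Defs
  imports Main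
begin

text \<open>Finite loopless multigraphs: a vertex set, a set of edge labels, and an
  incidence map sending each edge to its (two-element) set of ends.
  Parallel edges are distinct labels with the same ends.\<close>

datatype ('v, 'e) mgraph = MG (verts: "'v set") (edges: "'e set") (ends: "'e \<Rightarrow> 'v set")

definition wf_graph :: "('v, 'e) mgraph \<Rightarrow> bool" where
  "wf_graph G \<longleftrightarrow> finite (verts G) \<and> finite (edges G) \<and>
     (\<forall>e\<in>edges G. ends G e \<subseteq> verts G \<and> card (ends G e) = 2)"

definition connected_via :: "'v set \<Rightarrow> 'e set \<Rightarrow> ('e \<Rightarrow> 'v set) \<Rightarrow> bool" where
  "connected_via W F en \<longleftrightarrow>
     (\<forall>u\<in>W. \<forall>v\<in>W. (u, v) \<in> ({(a, b). \<exists>e\<in>F. en e = {a, b}})\<^sup>*)"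

definition connected :: "('v, 'e) mgraph \<Rightarrow> bool" where
  "connected G \<longleftrightarrow> connected_via (verts G) (edges G) (ends G)"

definition perfect_matching :: "('v, 'e) mgraph \<Rightarrow> 'e set \<Rightarrow> bool" where
  "perfect_matching G M \<longleftrightarrow> M \<subseteq> edges G \<and>
     (\<forall>v\<in>verts G. \<exists>!e. e \<in> M \<and> v \<in> ends G e)"

definition matching_covered :: "('v, 'e) mgraph \<Rightarrow> bool" where
  "matching_covered G \<longleftrightarrow> wf_graph G \<and> connected G \<and> card (verts G) \<ge> 2 \<and>
     (\<forall>e\<in>edges G. \<exists>M. perfect_matching G M \<and> e \<in> M)"

definition delete_verts :: "('v, 'e) mgraph \<Rightarrow> 'v set \<Rightarrow> ('v, 'e) mgraph" where
  "delete_verts G S = MG (verts G - S) {e \<in> edges G. ends G e \<inter> S = {}} (ends G)"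

definition edge_verts :: "('v, 'e) mgraph \<Rightarrow> 'e set \<Rightarrow> 'v set" where
  "edge_verts G C = (\<Union>e\<in>C. ends G e)"

text \<open>C (a set of edges) is a cycle of G: a nonempty connected subgraph in which
  every vertex has degree 2 (a pair of parallel edges is a cycle of length 2).\<close>
definition is_cycle :: "('v, 'e) mgraph \<Rightarrow> 'e set \<Rightarrow> bool" where
  "is_cycle G C \<longleftrightarrow> C \<subseteq> edges G \<and> C \<noteq> {} \<and> finite C \<and>
     (\<forall>v\<in>edge_verts G C. card {e \<in> C. v \<in> ends G e} = 2) \<and>
     connected_via (edge_verts G C) C (ends G)"

definition even_cycle :: "('v, 'e) mgraph \<Rightarrow> 'e set \<Rightarrow> bool" where
  "even_cycle G C \<longleftrightarrow> is_cycle G C \<and> even (card C)"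

definition cycle_extendable :: "('v, 'e) mgraph \<Rightarrow> bool" where
  "cycle_extendable G \<longleftrightarrow> matching_covered G \<and>
     (\<forall>C. even_cycle G C \<longrightarrow> (\<exists>M. perfect_matching (delete_verts G (edge_verts G C)) M))"

definition cut :: "('v, 'e) mgraph \<Rightarrow> 'v set \<Rightarrow> 'e set" where
  "cut G X = {e \<in> edges G. card (ends G e \<inter> X) = 1}"

definition tight_cut :: "('v, 'e) mgraph \<Rightarrow> 'v set \<Rightarrow> bool" where
  "tight_cut G X \<longleftrightarrow> X \<subseteq> verts G \<and>
     (\<forall>M. perfect_matching G M \<longrightarrow> card (M \<inter> cut G X) = 1)"

definition nontrivial_tight_cut :: "('v, 'e) mgraph \<Rightarrow> 'v set \<Rightarrow> bool" where
  "nontrivial_tight_cut G X \<longleftrightarrow> tight_cut G X \<and> card X \<ge> 2 \<and> card (verts G - X) \<ge> 2"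

text \<open>Shrinking X to a single vertex, which is named x (for some x in X);
  edges with both ends in X disappear, parallel edges are kept.\<close>
definition shrink :: "('v, 'e) mgraph \<Rightarrow> 'v set \<Rightarrow> 'v \<Rightarrow> ('v, 'e) mgraph" where
  "shrink G X x = MG ((verts G - X) \<union> {x}) {e \<in> edges G. \<not> ends G e \<subseteq> X}
     (\<lambda>e. (\<lambda>v. if v \<in> X then x else v) ` ends G e)"

text \<open>Graphs arising during a tight cut decomposition of G: replace a graph
  having a nontrivial tight cut \<partial>(X) by its cut-contractions (shrinking X,
  resp. its complement; both are covered since X ranges over all shores).\<close>
inductive tc_piece :: "('v, 'e) mgraph \<Rightarrow> ('v, 'e) mgraph \<Rightarrow> bool" for G where
  start: "tc_piece G G"
| split1: "tc_piece G H \<Longrightarrow> nontrivial_tight_cut H X \<Longrightarrow> x \<in> X \<Longrightarrow>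
            tc_piece G (shrink H X x)"
| split2: "tc_piece G H \<Longrightarrow> nontrivial_tight_cut H X \<Longrightarrow> y \<in> verts H - X \<Longrightarrow>
            tc_piece G (shrink H (verts H - X) y)"

definition bipartite :: "('v, 'e) mgraph \<Rightarrow> bool" where
  "bipartite G \<longleftrightarrow> (\<exists>A \<subseteq> verts G. \<forall>e\<in>edges G. card (ends G e \<inter> A) = 1)"

definition is_brick :: "('v, 'e) mgraph \<Rightarrow> ('v, 'e) mgraph \<Rightarrow> bool" where
  "is_brick G H \<longleftrightarrow> tc_piece G H \<and> \<not> (\<exists>X. nontrivial_tight_cut H X) \<and> \<not> bipartite H"

definition is_brace :: "('v, 'e) mgraph \<Rightarrow> ('v, 'e) mgraph \<Rightarrow> bool" where
  "is_brace G H \<longleftrightarrow> tc_piece G H \<and> \<not> (\<exists>X. nontrivial_tight_cut H X) \<and> bipartite H"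

end

(* Tight cut contractions of a cycle-extendable graph are cycle-extendable; the theorem then
   follows by induction along the tight cut decomposition.  Let S arise from H by shrinking the
   shore X of a tight cut to x, and let C be an even cycle of S.  If C avoids x, it is an even
   cycle of H; a perfect matching of H - V(C) together with half of C is a perfect matching of H,
   so it has exactly one edge in the cut, and its edges outside X form a perfect matching of
   S - V(C).  If C passes through x by edges e1, e2 with ends a1, a2 in X, take perfect matchings
   M containing e1 and M' containing e2.  The edges of C together with the edges inside X lying in
   exactly one of M, M' form a 2-regular graph, and a parity count shows that its component Q
   through a1 also contains a2.  Q is an even cycle of H extending C through X; a perfect
   matching of H - V(Q) together with half of Q is a perfect matching of H whose cut edge lies in
   Q, so its edges outside X form a perfect matching of S - V(C). *)

theory Submission
  imports Defs
begin

section \<open>Cycles and their perfect matchings\<close>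

definition edge_rel :: "('e \<Rightarrow> 'v set) \<Rightarrow> 'e set \<Rightarrow> ('v \<times> 'v) set" where
  "edge_rel en F = {(a, b). \<exists>e\<in>F. en e = {a, b}}"

lemma connected_via_iff_edge_rel:
  "connected_via W F en \<longleftrightarrow> (\<forall>u\<in>W. \<forall>v\<in>W. (u, v) \<in> (edge_rel en F)\<^sup>*)"
  unfolding connected_via_def edge_rel_def ..

lemma edge_rel_iff: "(a, b) \<in> edge_rel en F \<longleftrightarrow> (\<exists>e\<in>F. en e = {a, b})"
  unfolding edge_rel_def by simp

lemma sym_edge_rel: "sym (edge_rel en F)"
  unfolding edge_rel_def sym_def by (auto simp: insert_commute)

lemma edge_rel_cong: "\<forall>f\<in>F. en f = en' f \<Longrightarrow> edge_rel en F = edge_rel en' F"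
  unfolding edge_rel_def by auto

lemma rtrancl_map_rtrancl:
  assumes "(a, b) \<in> r\<^sup>*" and "\<And>p q. (p, q) \<in> r \<Longrightarrow> (f p, f q) \<in> s\<^sup>*"
  shows "(f a, f b) \<in> s\<^sup>*"
  using assms(1)
proof induction
  case (step y z)
  then show ?case using assms(2) rtrancl_trans by metis
qed simp

lemma ends_subset_edge_verts: "f \<in> C \<Longrightarrow> ends G f \<subseteq> edge_verts G C"
  unfolding edge_verts_def by blast

lemma edge_verts_cong: "\<forall>f\<in>C. ends G f = ends G' f \<Longrightarrow> edge_verts G C = edge_verts G' C"
  unfolding edge_verts_def by simp

definition covers_once :: "('v, 'e) mgraph \<Rightarrow> 'e set \<Rightarrow> 'v set \<Rightarrow> bool" where
  "covers_once G F W \<longleftrightarrow> (\<forall>v\<in>W. \<exists>!f. f \<in> F \<and> v \<in> ends G f)"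

lemma perfect_matching_iff_covers_once:
  "perfect_matching G M \<longleftrightarrow> M \<subseteq> edges G \<and> covers_once G M (verts G)"
  unfolding perfect_matching_def covers_once_def ..

lemma perfect_matching_delete_verts_iff:
  "perfect_matching (delete_verts G D) N \<longleftrightarrow>
     N \<subseteq> edges G \<and> (\<forall>f\<in>N. ends G f \<inter> D = {}) \<and> covers_once G N (verts G - D)"
  unfolding perfect_matching_def covers_once_def delete_verts_def by auto

lemma delete_verts_empty: "delete_verts G {} = G"
  unfolding delete_verts_def by (cases G) simp

lemma covers_once_unique:
  "covers_once G F W \<Longrightarrow> v \<in> W \<Longrightarrow> f \<in> F \<Longrightarrow> v \<in> ends G f \<Longrightarrow> f' \<in> F \<Longrightarrow> v \<in> ends G f'
    \<Longrightarrow> f = f'"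
  unfolding covers_once_def by blast

lemma covers_onceE:
  assumes "covers_once G F W" "v \<in> W"
  obtains f where "f \<in> F" "v \<in> ends G f" "\<And>f'. f' \<in> F \<Longrightarrow> v \<in> ends G f' \<Longrightarrow> f' = f"
  using assms unfolding covers_once_def by blast

lemma card_covers_once:
  assumes "finite W" "finite F" "\<forall>f\<in>F. card (ends G f) = 2 \<and> ends G f \<subseteq> W"
    and "covers_once G F W"
  shows "card W = 2 * card F"
proof -
  have W: "W = (\<Union>f\<in>F. ends G f)"
  proof
    show "W \<subseteq> (\<Union>f\<in>F. ends G f)"
    proof
      fix v assume "v \<in> W"
      with assms(4) obtain f where "f \<in> F" "v \<in> ends G f" by (rule covers_onceE)
      then show "v \<in> (\<Union>f\<in>F. ends G f)" by blast
    qed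
    show "(\<Union>f\<in>F. ends G f) \<subseteq> W" using assms(3) by blast
  qed
  have "\<forall>f\<in>F. finite (ends G f)" using assms(3) by (auto intro: finite_subset[OF _ assms(1)])
  moreover have "\<forall>f\<in>F. \<forall>f'\<in>F. f \<noteq> f' \<longrightarrow> ends G f \<inter> ends G f' = {}"
  proof (intro ballI impI)
    fix f f' assume "f \<in> F" "f' \<in> F" "f \<noteq> f'"
    then show "ends G f \<inter> ends G f' = {}"
      using covers_once_unique[OF assms(4)] assms(3) by blast
  qed
  ultimately have "card W = (\<Sum>f\<in>F. card (ends G f))"
    unfolding W by (rule card_UN_disjoint[OF assms(2)])
  also have "\<dots> = (\<Sum>f\<in>F. 2)" using assms(3) by (intro sum.cong) auto
  also have "\<dots> = 2 * card F" by simp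
  finally show ?thesis .
qed

lemma perfect_matching_union:
  assumes N: "perfect_matching (delete_verts H W) N"
    and F: "F \<subseteq> edges H" "\<forall>f\<in>F. ends H f \<subseteq> W" "covers_once H F W"
  shows "perfect_matching H (N \<union> F)"
  unfolding perfect_matching_iff_covers_once covers_once_def
proof (intro conjI ballI)
  have N_edges: "N \<subseteq> edges H" and N_avoids: "\<forall>f\<in>N. ends H f \<inter> W = {}"
    and N_covers: "covers_once H N (verts H - W)"
    using N unfolding perfect_matching_delete_verts_iff by auto
  show "N \<union> F \<subseteq> edges H" using N_edges F(1) by blast
  fix v assume v: "v \<in> verts H"
  show "\<exists>!f. f \<in> N \<union> F \<and> v \<in> ends H f"
  proof (cases "v \<in> W")
    case True
    then obtain f where "f \<in> F" "v \<in> ends H f" "\<And>f'. f' \<in> F \<Longrightarrow> v \<in> ends H f' \<Longrightarrow> f' = f"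
      by (rule covers_onceE[OF F(3)]) blast
    then show ?thesis using N_avoids True by (intro ex1I[of _ f]) blast+
  next
    case False
    then have "v \<in> verts H - W" using v by simp
    then obtain f where "f \<in> N" "v \<in> ends H f" "\<And>f'. f' \<in> N \<Longrightarrow> v \<in> ends H f' \<Longrightarrow> f' = f"
      by (rule covers_onceE[OF N_covers]) blast
    then show ?thesis using F(2) False by (intro ex1I[of _ f]) blast+
  qed
qed

lemma card_2_obtain_other:
  assumes "card A = 2" "a \<in> A"
  obtains b where "A = {a, b}" "a \<noteq> b"
proof -
  obtain p q where A: "A = {p, q}" "p \<noteq> q" using assms(1) by (meson card_2_iff)
  show ?thesis
  proof (cases "a = p")
    case True
    then show ?thesis using A that by blast
  next
    case False
    then have "a = q" using A assms(2) by blast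
    then show ?thesis using A that[of p] by (simp add: insert_commute)
  qed
qed

lemma cycle_degree:
  "is_cycle G C \<Longrightarrow> f \<in> C \<Longrightarrow> v \<in> ends G f \<Longrightarrow> card {f\<in>C. v \<in> ends G f} = 2"
  using ends_subset_edge_verts[of f C G] unfolding is_cycle_def by blast

lemma cycle_other_edge:
  assumes "is_cycle G C" "f \<in> C" "v \<in> ends G f"
  obtains g where "{f'\<in>C. v \<in> ends G f'} = {f, g}" "f \<noteq> g"
proof -
  have "card {f'\<in>C. v \<in> ends G f'} = 2" by (rule cycle_degree[OF assms])
  moreover have "f \<in> {f'\<in>C. v \<in> ends G f'}" using assms(2,3) by simp
  ultimately show ?thesis using that by (rule card_2_obtain_other)
qed

lemma cycle_verts_closed:
  assumes cycle: "is_cycle G C" and "u \<in> A" "u \<in> edge_verts G C"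
    and closed: "\<And>f. f \<in> C \<Longrightarrow> ends G f \<inter> A \<noteq> {} \<Longrightarrow> ends G f \<subseteq> A"
  shows "edge_verts G C \<subseteq> A"
proof -
  have step: "edge_rel (ends G) C `` A \<subseteq> A"
  proof
    fix q assume "q \<in> edge_rel (ends G) C `` A"
    then obtain p where p: "p \<in> A" "(p, q) \<in> edge_rel (ends G) C" by blast
    then obtain f where f: "f \<in> C" "ends G f = {p, q}" unfolding edge_rel_iff by blast
    then show "q \<in> A" using closed[OF f(1)] p(1) by auto
  qed
  have "connected_via (edge_verts G C) C (ends G)" using cycle by (simp add: is_cycle_def)
  then have "edge_verts G C \<subseteq> (edge_rel (ends G) C)\<^sup>* `` A"
    using assms(2,3) unfolding connected_via_iff_edge_rel by blast
  then show ?thesis using Image_closed_trancl[OF step] by simp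
qed

lemma cycle_regular_subset_eq:
  assumes cycle: "is_cycle G C" and two_ends: "\<forall>f\<in>C. card (ends G f) = 2"
    and "B \<subseteq> C" "b \<in> B" and regular: "\<forall>v\<in>edge_verts G B. card {f\<in>B. v \<in> ends G f} = 2"
  shows "B = C"
proof
  have closed: "f \<in> B" if v: "v \<in> edge_verts G B" and f: "f \<in> C" "v \<in> ends G f" for v f
  proof -
    have "{f\<in>B. v \<in> ends G f} \<subseteq> {f\<in>C. v \<in> ends G f}" using \<open>B \<subseteq> C\<close> by blast
    moreover have "finite {f\<in>C. v \<in> ends G f}" using cycle unfolding is_cycle_def by simp
    moreover have "card {f\<in>C. v \<in> ends G f} = 2" using cycle_degree[OF cycle f] .
    ultimately have "{f\<in>B. v \<in> ends G f} = {f\<in>C. v \<in> ends G f}"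
      using regular v by (metis card_subset_eq)
    then show ?thesis using f by blast
  qed
  have "card (ends G b) = 2" using two_ends \<open>B \<subseteq> C\<close> \<open>b \<in> B\<close> by blast
  then obtain u where "u \<in> ends G b" by fastforce
  then have "u \<in> edge_verts G B" "u \<in> edge_verts G C"
    using \<open>b \<in> B\<close> \<open>B \<subseteq> C\<close> ends_subset_edge_verts[of b B G] ends_subset_edge_verts[of b C G] by auto
  then have verts: "edge_verts G C \<subseteq> edge_verts G B"
  proof (rule cycle_verts_closed[OF cycle])
    fix f assume "f \<in> C" "ends G f \<inter> edge_verts G B \<noteq> {}"
    then have "f \<in> B" using closed by blast
    then show "ends G f \<subseteq> edge_verts G B" by (rule ends_subset_edge_verts)
  qed
  show "C \<subseteq> B"
  proof
    fix f assume "f \<in> C"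
    then obtain v where v: "v \<in> ends G f" using two_ends by fastforce
    then have "v \<in> edge_verts G B" using verts ends_subset_edge_verts[OF \<open>f \<in> C\<close>, of G] by auto
    then show "f \<in> B" using closed \<open>f \<in> C\<close> v by simp
  qed
qed (rule \<open>B \<subseteq> C\<close>)

lemma cycle_digon_eq:
  assumes "is_cycle G C" "\<forall>f\<in>C. card (ends G f) = 2" "e \<in> C" "g \<in> C" "e \<noteq> g"
    and "ends G e = ends G g"
  shows "C = {e, g}"
proof -
  have "{f\<in>{e, g}. y \<in> ends G f} = {e, g}" if "y \<in> edge_verts G {e, g}" for y
    using that assms(6) unfolding edge_verts_def by auto
  then show ?thesis using assms(3-5) by (intro cycle_regular_subset_eq[OF assms(1,2), symmetric]) auto
qed

lemma cycle_triangle_eq: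
  assumes "is_cycle G C" "\<forall>f\<in>C. card (ends G f) = 2" "e \<in> C" "g \<in> C" "h \<in> C"
    and "ends G e = {u, v}" "ends G g = {v, w}" "ends G h = {w, u}" "distinct [u, v, w]"
  shows "C = {e, g, h}"
proof -
  have "e \<noteq> g" "g \<noteq> h" "h \<noteq> e" using assms(6-9) by (auto simp: doubleton_eq_iff)
  have "card {f\<in>{e, g, h}. y \<in> ends G f} = 2" if "y \<in> edge_verts G {e, g, h}" for y
  proof -
    have "{f\<in>{e, g, h}. y \<in> ends G f} = {e, h} \<or> {f\<in>{e, g, h}. y \<in> ends G f} = {e, g} \<or>
        {f\<in>{e, g, h}. y \<in> ends G f} = {g, h}"
      using that assms(6-9) unfolding edge_verts_def by auto
    then show ?thesis using \<open>e \<noteq> g\<close> \<open>g \<noteq> h\<close> \<open>h \<noteq> e\<close> by (elim disjE) simp_all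
  qed
  then show ?thesis using assms(3-5) by (intro cycle_regular_subset_eq[OF assms(1,2), symmetric]) auto
qed

lemma is_cycle_transfer:
  assumes "is_cycle G C" "C \<subseteq> edges G'" "\<forall>f\<in>C. ends G f = ends G' f"
  shows "is_cycle G' C"
proof -
  have "{f\<in>C. v \<in> ends G f} = {f\<in>C. v \<in> ends G' f}" for v using assms(3) by auto
  then show ?thesis using assms edge_verts_cong[OF assms(3)] edge_rel_cong[OF assms(3)]
    unfolding is_cycle_def connected_via_iff_edge_rel by simp
qed

lemma cycle_covers_once_complement:
  assumes "is_cycle G C" "F \<subseteq> C" "covers_once G F (edge_verts G C)"
  shows "covers_once G (C - F) (edge_verts G C)"
  unfolding covers_once_def
proof
  fix v assume v: "v \<in> edge_verts G C"
  obtain f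
    where f: "f \<in> F" "v \<in> ends G f" and unique: "\<And>f'. f' \<in> F \<Longrightarrow> v \<in> ends G f' \<Longrightarrow> f' = f"
    by (rule covers_onceE[OF assms(3) v]) blast
  obtain f' where at_v: "{f''\<in>C. v \<in> ends G f''} = {f, f'}" "f \<noteq> f'"
    using cycle_other_edge[OF assms(1) _ f(2)] f(1) assms(2) by blast
  have "f' \<in> C - F" "v \<in> ends G f'" using at_v unique by auto
  moreover have "f'' = f'" if "f'' \<in> C - F" "v \<in> ends G f''" for f''
  proof -
    have "f'' \<in> {f''\<in>C. v \<in> ends G f''}" using that by simp
    then have "f'' \<in> {f, f'}" unfolding at_v(1) .
    moreover have "f'' \<noteq> f" using that(1) f(1) by blast
    ultimately show ?thesis by simp
  qed
  ultimately show "\<exists>!f''. f'' \<in> C - F \<and> v \<in> ends G f''" by (intro ex1I[of _ f']) blast+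
qed

lemma cycle_even_if_covers_once:
  assumes cycle: "is_cycle G C" and two_ends: "\<forall>f\<in>C. card (ends G f) = 2"
    and "F \<subseteq> C" "covers_once G F (edge_verts G C)"
  shows "even (card C)"
proof -
  have "finite C" using cycle unfolding is_cycle_def by simp
  then have "finite F" "finite (C - F)" using \<open>F \<subseteq> C\<close> by (auto intro: finite_subset)
  have "finite (ends G f)" if "f \<in> C" for f using two_ends that card_ge_0_finite by force
  then have "finite (edge_verts G C)" using \<open>finite C\<close> unfolding edge_verts_def by blast
  have inside: "\<forall>f\<in>D. card (ends G f) = 2 \<and> ends G f \<subseteq> edge_verts G C" if "D \<subseteq> C" for D
    using that two_ends ends_subset_edge_verts[of _ C G] by blast
  have "card (edge_verts G C) = 2 * card F"
    by (rule card_covers_once[OF \<open>finite (edge_verts G C)\<close> \<open>finite F\<close> inside[OF \<open>F \<subseteq> C\<close>] assms(4)])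
  moreover have "card (edge_verts G C) = 2 * card (C - F)"
    by (rule card_covers_once[OF \<open>finite (edge_verts G C)\<close> \<open>finite (C - F)\<close> inside
          cycle_covers_once_complement[OF cycle assms(3,4)]]) blast
  moreover have "card C = card F + card (C - F)"
    using \<open>finite C\<close> \<open>F \<subseteq> C\<close> card_Diff_subset[of F C] card_mono[of C F] \<open>finite F\<close> by simp
  ultimately show ?thesis by simp
qed

text \<open>Replacing the path u v w z of C by the single edge e = uz yields a cycle with two
  edges fewer; a perfect matching of the shorter cycle containing e lifts by adding h.\<close>

locale cycle_shortcut =
  fixes G :: "('v, 'e) mgraph" and C :: "'e set" and e g h :: 'e and u v w z :: 'v
  assumes cycle: "is_cycle G C" and two_ends: "\<forall>f\<in>C. card (ends G f) = 2"
    and e: "e \<in> C" "ends G e = {u, v}"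
    and g: "g \<in> C" "ends G g = {v, w}"
    and h: "h \<in> C" "ends G h = {w, z}"
    and at_v: "{f\<in>C. v \<in> ends G f} = {e, g}"
    and at_w: "{f\<in>C. w \<in> ends G f} = {g, h}"
    and distinct: "distinct [u, v, w, z]"
begin

definition G' :: "('v, 'e) mgraph" where
  "G' = MG (verts G) (edges G) ((ends G)(e := {u, z}))"

definition C' :: "'e set" where
  "C' = C - {g, h}"

lemma edges_distinct: "e \<noteq> g" "g \<noteq> h" "h \<noteq> e"
  using e g h distinct by auto

lemma e_in_C': "e \<in> C'"
  unfolding C'_def using e edges_distinct by simp

lemma ends_G'_e: "ends G' e = {u, z}"
  unfolding G'_def by simp

lemma ends_G'_other: "f \<noteq> e \<Longrightarrow> ends G' f = ends G f"
  unfolding G'_def by simp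

lemma mem_ends_G'_iff: "y \<notin> {v, z} \<Longrightarrow> y \<in> ends G' f \<longleftrightarrow> y \<in> ends G f"
  unfolding G'_def using e(2) by auto

lemma v_w_notin_C':
  assumes "f \<in> C'" shows "v \<notin> ends G' f" "w \<notin> ends G' f"
proof -
  have f: "f \<in> C" "f \<noteq> g" "f \<noteq> h" using assms unfolding C'_def by auto
  show "v \<notin> ends G' f"
  proof (cases "f = e")
    case True then show ?thesis using ends_G'_e distinct by auto
  next
    case False then show ?thesis using ends_G'_other f at_v by blast
  qed
  show "w \<notin> ends G' f"
  proof (cases "f = e")
    case True then show ?thesis using ends_G'_e distinct by auto
  next
    case False then show ?thesis using ends_G'_other f at_w by blast
  qed
qed

lemma edge_verts_C': "edge_verts G' C' = edge_verts G C - {v, w}"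
proof
  show "edge_verts G' C' \<subseteq> edge_verts G C - {v, w}"
  proof
    fix y assume "y \<in> edge_verts G' C'"
    then obtain f where f: "f \<in> C'" "y \<in> ends G' f" unfolding edge_verts_def by blast
    then have "y \<noteq> v" "y \<noteq> w" using v_w_notin_C' by auto
    moreover have "y \<in> edge_verts G C"
    proof (cases "f = e")
      case True
      then have "y \<in> ends G e \<union> ends G h" using f(2) ends_G'_e e(2) h(2) by auto
      then show ?thesis using e(1) h(1) unfolding edge_verts_def by blast
    next
      case False
      then show ?thesis using f ends_G'_other unfolding C'_def edge_verts_def by auto
    qed
    ultimately show "y \<in> edge_verts G C - {v, w}" by simp
  qed
  show "edge_verts G C - {v, w} \<subseteq> edge_verts G' C'"
  proof
    fix y assume y: "y \<in> edge_verts G C - {v, w}"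
    then obtain f where f: "f \<in> C" "y \<in> ends G f" unfolding edge_verts_def by blast
    show "y \<in> edge_verts G' C'"
    proof (cases "y \<in> {u, z}")
      case True
      then show ?thesis using e_in_C' ends_G'_e unfolding edge_verts_def by blast
    next
      case False
      then have "f \<noteq> e" "f \<noteq> g" "f \<noteq> h" using f(2) y e(2) g(2) h(2) by auto
      then show ?thesis using f ends_G'_other unfolding C'_def edge_verts_def by blast
    qed
  qed
qed

lemma degree_C':
  assumes y: "y \<in> edge_verts G' C'"
  shows "card {f\<in>C'. y \<in> ends G' f} = 2"
proof (cases "y = z")
  case True
  obtain k where k: "{f\<in>C. z \<in> ends G f} = {h, k}" "h \<noteq> k"
    using cycle_other_edge[OF cycle h(1)] h(2) by blast
  have "k \<in> C" "z \<in> ends G k" using k(1) by blast+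
  moreover have "k \<noteq> e" "k \<noteq> g" using \<open>z \<in> ends G k\<close> e(2) g(2) distinct by auto
  ultimately have "{f\<in>C'. z \<in> ends G' f} = {e, k}"
    using k ends_G'_e ends_G'_other e_in_C' unfolding C'_def by auto
  then show ?thesis using True \<open>k \<noteq> e\<close> by simp
next
  case False
  have "y \<in> edge_verts G C" "y \<notin> {v, w}" using y edge_verts_C' by auto
  then have "y \<notin> ends G g" "y \<notin> ends G h" using False g(2) h(2) by auto
  then have "{f\<in>C'. y \<in> ends G' f} = {f\<in>C. y \<in> ends G f}"
    using mem_ends_G'_iff False \<open>y \<notin> {v, w}\<close> unfolding C'_def by auto
  then show ?thesis using cycle \<open>y \<in> edge_verts G C\<close> unfolding is_cycle_def by simp
qed

definition bypass :: "'v \<Rightarrow> 'v" where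
  "bypass y = (if y = v then u else if y = w then z else y)"

lemma edge_rel_bypass:
  assumes "(p, q) \<in> edge_rel (ends G) C"
  shows "(bypass p, bypass q) \<in> (edge_rel (ends G') C')\<^sup>*"
proof -
  obtain f where f: "f \<in> C" "ends G f = {p, q}" using assms unfolding edge_rel_iff by blast
  consider "f = e" | "f = g" | "f = h" | "f \<in> C'" "f \<noteq> e" using f(1) unfolding C'_def by blast
  then show ?thesis
  proof cases
    case 1
    then have "bypass p = bypass q" using f(2) e(2) distinct unfolding bypass_def
      by (auto simp: doubleton_eq_iff)
    then show ?thesis by simp
  next
    case 2
    then have "ends G' e = {bypass p, bypass q}" using f(2) g(2) distinct ends_G'_e
      unfolding bypass_def by (auto simp: doubleton_eq_iff)
    then have "(bypass p, bypass q) \<in> edge_rel (ends G') C'" using e_in_C' unfolding edge_rel_iff by blast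
    then show ?thesis by simp
  next
    case 3
    then have "bypass p = bypass q" using f(2) h(2) distinct unfolding bypass_def
      by (auto simp: doubleton_eq_iff)
    then show ?thesis by simp
  next
    case 4
    then have "ends G' f = {p, q}" using f(2) ends_G'_other by simp
    moreover have "bypass p = p" "bypass q = q"
      using v_w_notin_C'[OF 4(1)] calculation unfolding bypass_def by auto
    ultimately have "(bypass p, bypass q) \<in> edge_rel (ends G') C'"
      using 4(1) unfolding edge_rel_iff by auto
    then show ?thesis by simp
  qed
qed

lemma connected_C': "connected_via (edge_verts G' C') C' (ends G')"
  unfolding connected_via_iff_edge_rel
proof (intro ballI)
  fix a b assume a: "a \<in> edge_verts G' C'" and b: "b \<in> edge_verts G' C'"
  then have "(a, b) \<in> (edge_rel (ends G) C)\<^sup>*"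
    using cycle edge_verts_C' unfolding is_cycle_def connected_via_iff_edge_rel by blast
  then have "(bypass a, bypass b) \<in> (edge_rel (ends G') C')\<^sup>*"
    using edge_rel_bypass by (rule rtrancl_map_rtrancl)
  moreover have "bypass a = a" "bypass b = b" using a b edge_verts_C' unfolding bypass_def by auto
  ultimately show "(a, b) \<in> (edge_rel (ends G') C')\<^sup>*" by simp
qed

lemma cycle_C': "is_cycle G' C'"
  unfolding is_cycle_def
  using cycle degree_C' connected_C' e_in_C' unfolding G'_def C'_def is_cycle_def by auto

lemma two_ends_C': "\<forall>f\<in>C'. card (ends G' f) = 2"
proof
  fix f assume "f \<in> C'"
  show "card (ends G' f) = 2"
  proof (cases "f = e")
    case True
    then show ?thesis using ends_G'_e distinct by simp
  next
    case False
    then show ?thesis using \<open>f \<in> C'\<close> two_ends ends_G'_other unfolding C'_def by simp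
  qed
qed

lemma card_C': "card C = card C' + 2"
proof -
  have "finite C" "{g, h} \<subseteq> C" using cycle g(1) h(1) unfolding is_cycle_def by auto
  then have "card C' = card C - 2" "2 \<le> card C"
    using card_Diff_subset[of "{g, h}" C] card_mono[of C "{g, h}"] edges_distinct
    unfolding C'_def by auto
  then show ?thesis by simp
qed

context
  fixes F' assumes F': "F' \<subseteq> C'" "e \<in> F'" "covers_once G' F' (edge_verts G' C')"
begin

lemma lift_subset: "insert h F' \<subseteq> C" and g_notin_lift: "g \<notin> insert h F'"
  using F'(1) h(1) edges_distinct unfolding C'_def by auto

lemma lift_unique_G':
  assumes "y \<in> edge_verts G' C'" "f \<in> F'" "y \<in> ends G' f" "f' \<in> F'" "y \<in> ends G' f'"
  shows "f = f'"
  using covers_once_unique[OF F'(3)] assms by blast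

lemma lift_edge_at_u_v:
  assumes "y \<in> {u, v}" "f \<in> insert h F'" "y \<in> ends G f"
  shows "f = e"
proof (cases "y = v")
  case True
  then have "f \<in> {f\<in>C. v \<in> ends G f}" using assms lift_subset by auto
  then show ?thesis using at_v g_notin_lift assms(2) by auto
next
  case False
  then have "f \<noteq> h" using assms h(2) distinct by auto
  then have "f \<in> F'" "y \<in> ends G' f" using assms False mem_ends_G'_iff[of y f] distinct by auto
  moreover have "y \<in> edge_verts G' C'" "y \<in> ends G' e"
    using assms(1) False e_in_C' ends_G'_e unfolding edge_verts_def by auto
  ultimately show ?thesis using lift_unique_G' F'(2) by blast
qed

lemma lift_edge_at_w_z:
  assumes "y \<in> {w, z}" "f \<in> insert h F'" "y \<in> ends G f"
  shows "f = h"
proof (cases "y = w")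
  case True
  then have "f \<in> {f\<in>C. w \<in> ends G f}" using assms lift_subset by auto
  then show ?thesis using at_w g_notin_lift assms(2) by auto
next
  case False
  show ?thesis
  proof (rule ccontr)
    assume "f \<noteq> h"
    moreover have "f \<noteq> e" using assms(1,3) False e(2) distinct by auto
    ultimately have "f \<in> F'" "y \<in> ends G' f" using assms ends_G'_other by auto
    moreover have "y \<in> edge_verts G' C'" "y \<in> ends G' e"
      using assms(1) False e_in_C' ends_G'_e unfolding edge_verts_def by auto
    ultimately show False using lift_unique_G' F'(2) \<open>f \<noteq> e\<close> by blast
  qed
qed

lemma covers_once_lift: "covers_once G (insert h F') (edge_verts G C)"
  unfolding covers_once_def
proof
  fix y assume y: "y \<in> edge_verts G C"
  consider "y \<in> {u, v}" | "y \<in> {w, z}" | "y \<notin> {u, v, w, z}" by blast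
  then show "\<exists>!f. f \<in> insert h F' \<and> y \<in> ends G f"
  proof cases
    case 1
    then show ?thesis using lift_edge_at_u_v F'(2) e(2) by (intro ex1I[of _ e]) auto
  next
    case 2
    then show ?thesis using lift_edge_at_w_z h(2) by (intro ex1I[of _ h]) auto
  next
    case 3
    then have y': "y \<in> edge_verts G' C'" using y edge_verts_C' by simp
    then obtain f where f: "f \<in> F'" "y \<in> ends G' f" using F'(3) unfolding covers_once_def by blast
    have same: "y \<in> ends G' f' \<longleftrightarrow> y \<in> ends G f'" for f' using 3 mem_ends_G'_iff by simp
    have "f' = f" if "f' \<in> insert h F'" "y \<in> ends G f'" for f'
      using that lift_unique_G'[OF y' _ _ f] same h(2) 3 by auto
    then show ?thesis using f same by (intro ex1I[of _ f]) auto
  qed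
qed

end

end

lemma even_cycle_covers_once:
  assumes "even_cycle G C" "\<forall>f\<in>C. card (ends G f) = 2" "e \<in> C"
  shows "\<exists>F\<subseteq>C. e \<in> F \<and> covers_once G F (edge_verts G C)"
  using assms
proof (induction "card C" arbitrary: G C e rule: less_induct)
  case less
  have cycle: "is_cycle G C" and even: "even (card C)" and two_ends: "\<forall>f\<in>C. card (ends G f) = 2"
    and e: "e \<in> C" using less.prems unfolding even_cycle_def by auto
  obtain u v where e_ends: "ends G e = {u, v}" "u \<noteq> v" using two_ends e by (meson card_2_iff)
  obtain g where at_v: "{f\<in>C. v \<in> ends G f} = {e, g}" "e \<noteq> g"
    using cycle_other_edge[OF cycle e] e_ends(1) by blast
  have g: "g \<in> C" "v \<in> ends G g" using at_v(1) by blast+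
  obtain w where g_ends: "ends G g = {v, w}" "v \<noteq> w" using card_2_obtain_other two_ends g by metis
  show ?case
  proof (cases "w = u")
    case True
    then have "C = {e, g}" using cycle_digon_eq[OF cycle two_ends] e g(1) at_v(2) e_ends(1) g_ends(1)
      by (simp add: insert_commute)
    then have "edge_verts G C = {u, v}" using e_ends(1) g_ends(1) True unfolding edge_verts_def by auto
    then show ?thesis using e e_ends(1) by (intro exI[of _ "{e}"]) (auto simp: covers_once_def)
  next
    case w_ne_u: False
    obtain h where at_w: "{f\<in>C. w \<in> ends G f} = {g, h}" "g \<noteq> h"
      using cycle_other_edge[OF cycle g(1)] g_ends(1) by blast
    have h: "h \<in> C" "w \<in> ends G h" using at_w(1) by blast+
    obtain z where h_ends: "ends G h = {w, z}" "w \<noteq> z" using card_2_obtain_other two_ends h by metis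
    have "h \<noteq> e" using h(2) e_ends(1) w_ne_u g_ends(2) by auto
    then have "z \<noteq> v" using h(1) h_ends(1) at_v(1) at_w(2) by auto
    moreover have "z \<noteq> u"
    proof
      assume "z = u"
      then have "C = {e, g, h}"
        using cycle_triangle_eq[OF cycle two_ends] e g(1) h(1) e_ends g_ends h_ends w_ne_u by simp
      then have "card C = 3" using at_v(2) at_w(2) \<open>h \<noteq> e\<close> by auto
      then show False using even by simp
    qed
    ultimately interpret cycle_shortcut G C e g h u v w z
      using cycle two_ends e e_ends g(1) g_ends h(1) h_ends at_v(1) at_w(1) w_ne_u
      by unfold_locales auto
    have "\<exists>F'\<subseteq>C'. e \<in> F' \<and> covers_once G' F' (edge_verts G' C')"
      using less.hyps[of C' G' e] card_C' even cycle_C' two_ends_C' e_in_C' unfolding even_cycle_def by simp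
    then obtain F' where "F' \<subseteq> C'" "e \<in> F'" "covers_once G' F' (edge_verts G' C')" by blast
    then show ?thesis using covers_once_lift lift_subset by (intro exI[of _ "insert h F'"]) auto
  qed
qed

section \<open>Shrinking a shore of a tight cut\<close>

lemma wf_graph_edgeE:
  assumes "wf_graph H" "e \<in> edges H"
  obtains p q where "ends H e = {p, q}" "p \<noteq> q" "p \<in> verts H" "q \<in> verts H"
proof -
  have "card (ends H e) = 2" "ends H e \<subseteq> verts H" using assms unfolding wf_graph_def by auto
  then show ?thesis using that by (metis card_2_iff insert_subset)
qed

lemma cut_iff:
  assumes "wf_graph H"
  shows "e \<in> cut H X \<longleftrightarrow> e \<in> edges H \<and> ends H e \<inter> X \<noteq> {} \<and> \<not> ends H e \<subseteq> X"
proof (cases "e \<in> edges H")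
  case True
  with assms obtain p q where "ends H e = {p, q}" "p \<noteq> q" "p \<in> verts H" "q \<in> verts H"
    by (rule wf_graph_edgeE)
  then show ?thesis using True unfolding cut_def by (cases "p \<in> X"; cases "q \<in> X") auto
qed (simp add: cut_def)

lemma cut_complement:
  assumes "wf_graph H"
  shows "cut H (verts H - X) = cut H X"
proof -
  have "card (ends H e \<inter> (verts H - X)) = 1 \<longleftrightarrow> card (ends H e \<inter> X) = 1" if e: "e \<in> edges H" for e
  proof -
    from assms e obtain p q where "ends H e = {p, q}" "p \<noteq> q" "p \<in> verts H" "q \<in> verts H"
      by (rule wf_graph_edgeE)
    then show ?thesis by (cases "p \<in> X"; cases "q \<in> X") auto
  qed
  then show ?thesis unfolding cut_def by auto
qed

lemma tight_cut_complement:
  assumes "wf_graph H" "tight_cut H X"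
  shows "tight_cut H (verts H - X)"
  using assms(2) cut_complement[OF assms(1), of X] unfolding tight_cut_def by simp

locale tight_shrink =
  fixes H :: "('v, 'e) mgraph" and X :: "'v set" and x :: 'v
  assumes wf: "wf_graph H" and tight: "tight_cut H X" and x_in_X: "x \<in> X"
    and outside_nonempty: "verts H - X \<noteq> {}"
begin

abbreviation S :: "('v, 'e) mgraph" where
  "S \<equiv> shrink H X x"

definition collapse :: "'v \<Rightarrow> 'v" where
  "collapse v = (if v \<in> X then x else v)"

lemma X_subset: "X \<subseteq> verts H"
  using tight unfolding tight_cut_def by simp

lemma one_crossing: "perfect_matching H M \<Longrightarrow> card (M \<inter> cut H X) = 1"
  using tight unfolding tight_cut_def by simp

lemma crossing_iff: "e \<in> cut H X \<longleftrightarrow> e \<in> edges H \<and> ends H e \<inter> X \<noteq> {} \<and> \<not> ends H e \<subseteq> X"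
  by (rule cut_iff[OF wf])

lemma verts_S: "verts S = (verts H - X) \<union> {x}"
  unfolding shrink_def by simp

lemma edges_S: "edges S = {e \<in> edges H. \<not> ends H e \<subseteq> X}"
  unfolding shrink_def by simp

lemma ends_S: "ends S e = collapse ` ends H e"
  unfolding shrink_def collapse_def by simp

lemma mem_collapse_image_outside: "v \<notin> X \<Longrightarrow> v \<in> collapse ` A \<longleftrightarrow> v \<in> A"
  unfolding collapse_def using x_in_X by force

lemma x_mem_collapse_image: "x \<in> collapse ` A \<longleftrightarrow> A \<inter> X \<noteq> {}"
  unfolding collapse_def using x_in_X by force

lemma collapse_image_disjoint: "A \<inter> X = {} \<Longrightarrow> collapse ` A = A"
  unfolding collapse_def by force

lemma mem_ends_S_outside: "v \<notin> X \<Longrightarrow> v \<in> ends S e \<longleftrightarrow> v \<in> ends H e"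
  unfolding ends_S by (rule mem_collapse_image_outside)

lemma x_mem_ends_S: "x \<in> ends S e \<longleftrightarrow> ends H e \<inter> X \<noteq> {}"
  unfolding ends_S by (rule x_mem_collapse_image)

lemma wf_S: "wf_graph S"
  unfolding wf_graph_def
proof (intro conjI ballI)
  show "finite (verts S)" "finite (edges S)"
    using wf unfolding wf_graph_def verts_S edges_S by simp_all
  fix e assume "e \<in> edges S"
  then have e: "e \<in> edges H" "\<not> ends H e \<subseteq> X" unfolding edges_S by auto
  obtain p q where pq: "ends H e = {p, q}" "p \<noteq> q" "p \<in> verts H" "q \<in> verts H"
    using wf e(1) by (rule wf_graph_edgeE)
  show "ends S e \<subseteq> verts S" using pq unfolding ends_S verts_S collapse_def by auto
  have "collapse p \<noteq> collapse q" using pq(1,2) e(2) x_in_X unfolding collapse_def by auto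
  then show "card (ends S e) = 2" using pq(1) unfolding ends_S by simp
qed

lemma connected_S:
  assumes "connected H"
  shows "connected S"
  unfolding connected_def connected_via_iff_edge_rel
proof (intro ballI)
  have collapse_onto: "\<exists>u'\<in>verts H. u = collapse u'" if "u \<in> verts S" for u
    using that x_in_X X_subset unfolding verts_S collapse_def by (cases "u = x") auto
  have step: "(collapse p, collapse q) \<in> (edge_rel (ends S) (edges S))\<^sup>*"
    if pq: "(p, q) \<in> edge_rel (ends H) (edges H)" for p q
  proof -
    obtain e where e: "e \<in> edges H" "ends H e = {p, q}" using pq unfolding edge_rel_iff by blast
    show ?thesis
    proof (cases "ends H e \<subseteq> X")
      case True
      then have "collapse p = collapse q" using e(2) unfolding collapse_def by simp
      then show ?thesis by simp
    next
      case False
      then have "e \<in> edges S" "ends S e = {collapse p, collapse q}" using e unfolding edges_S ends_S by auto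
      then have "(collapse p, collapse q) \<in> edge_rel (ends S) (edges S)" unfolding edge_rel_iff by blast
      then show ?thesis by simp
    qed
  qed
  fix u v assume "u \<in> verts S" "v \<in> verts S"
  then obtain u' v' where "u' \<in> verts H" "v' \<in> verts H" "u = collapse u'" "v = collapse v'"
    using collapse_onto by metis
  moreover have "(u', v') \<in> (edge_rel (ends H) (edges H))\<^sup>*"
    using assms calculation(1,2) unfolding connected_def connected_via_iff_edge_rel by blast
  ultimately show "(u, v) \<in> (edge_rel (ends S) (edges S))\<^sup>*"
    using rtrancl_map_rtrancl[of u' v' _ collapse, OF _ step] by simp
qed

lemma two_le_card_verts_S: "2 \<le> card (verts S)"
proof -
  obtain w where w: "w \<in> verts H - X" using outside_nonempty by blast
  then have "w \<noteq> x" using x_in_X by auto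
  then have "card {w, x} = 2" by simp
  moreover have "{w, x} \<subseteq> verts S" using w unfolding verts_S by auto
  moreover have "finite (verts S)" using wf_S unfolding wf_graph_def by simp
  ultimately show ?thesis by (metis card_mono)
qed

lemma matching_unique:
  assumes "perfect_matching H N" "v \<in> X" "n \<in> N" "v \<in> ends H n" "n' \<in> N" "v \<in> ends H n'"
  shows "n = n'"
proof (rule covers_once_unique)
  show "covers_once H N (verts H)" using assms(1) unfolding perfect_matching_iff_covers_once by simp
  show "v \<in> verts H" using assms(2) X_subset by blast
qed (fact assms)+

lemma matching_edge_at_X:
  assumes "perfect_matching H N" "v \<in> X"
  obtains n where "n \<in> N" "v \<in> ends H n"
  using assms X_subset unfolding perfect_matching_def by blast

lemma not_in_X_if_mem_ends_S: "v \<in> ends S e \<Longrightarrow> v \<noteq> x \<Longrightarrow> v \<notin> X"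
  unfolding ends_S collapse_def by auto

lemma crossing_edgeE:
  assumes "e \<in> cut H X"
  obtains a b where "ends H e = {a, b}" "a \<in> X" "b \<notin> X"
proof -
  obtain p q where pq: "ends H e = {p, q}" "p \<noteq> q"
    using wf crossing_iff assms by (meson wf_graph_edgeE)
  then show ?thesis using that assms crossing_iff by (cases "p \<in> X") (auto simp: insert_commute)
qed

lemma matching_through_crossing:
  assumes "matching_covered H" "e \<in> cut H X"
  obtains M where "perfect_matching H M" "M \<inter> cut H X = {e}"
proof -
  obtain M where M: "perfect_matching H M" "e \<in> M"
    using assms crossing_iff unfolding matching_covered_def by blast
  then obtain c where "M \<inter> cut H X = {c}" using one_crossing card_1_singletonE by blast
  then have "M \<inter> cut H X = {e}" using M(2) assms(2) by auto
  then show ?thesis using that M(1) by blast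
qed

lemma perfect_matching_S_one_crossing:
  assumes N: "perfect_matching (delete_verts H D) N" and D: "D \<subseteq> verts H - X"
    and one: "card (N \<inter> cut H X) = 1"
  shows "perfect_matching (delete_verts S D) (N \<inter> edges S)"
  unfolding perfect_matching_delete_verts_iff covers_once_def
proof (intro conjI ballI)
  have N_edges: "N \<subseteq> edges H" and N_avoids: "\<forall>f\<in>N. ends H f \<inter> D = {}"
    and N_covers: "covers_once H N (verts H - D)"
    using N unfolding perfect_matching_delete_verts_iff by auto
  show "N \<inter> edges S \<subseteq> edges S" by simp
  fix f assume "f \<in> N \<inter> edges S"
  then show "ends S f \<inter> D = {}" using N_avoids D mem_ends_S_outside by blast
next
  have N_edges: "N \<subseteq> edges H" and N_covers: "covers_once H N (verts H - D)"
    using N unfolding perfect_matching_delete_verts_iff by auto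
  fix v assume v: "v \<in> verts S - D"
  show "\<exists>!f. f \<in> N \<inter> edges S \<and> v \<in> ends S f"
  proof (cases "v = x")
    case True
    obtain c where c: "N \<inter> cut H X = {c}" using one by (rule card_1_singletonE)
    then have "c \<in> N \<inter> edges S" "x \<in> ends S c"
      using crossing_iff x_mem_ends_S unfolding edges_S by auto
    moreover have "f = c" if "f \<in> N \<inter> edges S" "x \<in> ends S f" for f
    proof -
      have "f \<in> N \<inter> cut H X" using that N_edges crossing_iff x_mem_ends_S unfolding edges_S by auto
      then show ?thesis using c by blast
    qed
    ultimately show ?thesis using True by (intro ex1I[of _ c]) blast+
  next
    case False
    then have "v \<notin> X" "v \<in> verts H - D" using v unfolding verts_S by auto
    then obtain f where f: "f \<in> N" "v \<in> ends H f" "\<And>f'. f' \<in> N \<Longrightarrow> v \<in> ends H f' \<Longrightarrow> f' = f"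
      using covers_onceE[OF N_covers] by metis
    have "f \<in> edges S" using f(1,2) N_edges \<open>v \<notin> X\<close> unfolding edges_S by auto
    then show ?thesis using f mem_ends_S_outside[OF \<open>v \<notin> X\<close>] by (intro ex1I[of _ f]) blast+
  qed
qed

lemma perfect_matching_S_no_crossing:
  assumes N: "perfect_matching (delete_verts H D) N" and none: "N \<inter> cut H X = {}"
  shows "perfect_matching (delete_verts S (insert x (D - X))) (N \<inter> edges S)"
  unfolding perfect_matching_delete_verts_iff covers_once_def
proof (intro conjI ballI)
  have N_edges: "N \<subseteq> edges H" and N_avoids: "\<forall>f\<in>N. ends H f \<inter> D = {}"
    using N unfolding perfect_matching_delete_verts_iff by auto
  show "N \<inter> edges S \<subseteq> edges S" by simp
  fix f assume f: "f \<in> N \<inter> edges S"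
  then have "ends H f \<inter> X = {}" using none N_edges crossing_iff unfolding edges_S by blast
  then show "ends S f \<inter> insert x (D - X) = {}"
    using f N_avoids collapse_image_disjoint x_in_X unfolding ends_S by auto
next
  have N_edges: "N \<subseteq> edges H" and N_covers: "covers_once H N (verts H - D)"
    using N unfolding perfect_matching_delete_verts_iff by auto
  fix v assume v: "v \<in> verts S - insert x (D - X)"
  then have "v \<notin> X" "v \<in> verts H - D" unfolding verts_S by auto
  then obtain f where f: "f \<in> N" "v \<in> ends H f" "\<And>f'. f' \<in> N \<Longrightarrow> v \<in> ends H f' \<Longrightarrow> f' = f"
    using covers_onceE[OF N_covers] by metis
  have "f \<in> edges S" using f(1,2) N_edges \<open>v \<notin> X\<close> unfolding edges_S by auto
  then show "\<exists>!f. f \<in> N \<inter> edges S \<and> v \<in> ends S f"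
    using f mem_ends_S_outside[OF \<open>v \<notin> X\<close>] by (intro ex1I[of _ f]) blast+
qed

lemma matching_covered_S:
  assumes "matching_covered H"
  shows "matching_covered S"
  unfolding matching_covered_def
proof (intro conjI ballI)
  show "wf_graph S" "2 \<le> card (verts S)" by (fact wf_S, fact two_le_card_verts_S)
  show "connected S" using assms connected_S unfolding matching_covered_def by blast
  fix e assume e: "e \<in> edges S"
  then obtain M where M: "perfect_matching H M" "e \<in> M"
    using assms unfolding matching_covered_def edges_S by blast
  then have "perfect_matching (delete_verts S {}) (M \<inter> edges S)"
    by (intro perfect_matching_S_one_crossing) (auto simp: one_crossing delete_verts_empty)
  then show "\<exists>M. perfect_matching S M \<and> e \<in> M" using M(2) e unfolding delete_verts_empty by blast
qed

lemma shrink_cycle_avoiding_x: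
  assumes ce: "cycle_extendable H" and C: "even_cycle S C" and x_notin: "x \<notin> edge_verts S C"
  shows "\<exists>N. perfect_matching (delete_verts S (edge_verts S C)) N"
proof -
  have cycle: "is_cycle S C" and even: "even (card C)" using C unfolding even_cycle_def by auto
  then have C_edges: "C \<subseteq> edges H" and "C \<noteq> {}" unfolding is_cycle_def edges_S by auto
  have avoid: "ends H f \<inter> X = {}" if "f \<in> C" for f
    using x_notin ends_subset_edge_verts[OF that, of S] x_mem_ends_S by blast
  then have same_ends: "\<forall>f\<in>C. ends S f = ends H f" using collapse_image_disjoint unfolding ends_S by simp
  then have same_verts: "edge_verts S C = edge_verts H C" by (rule edge_verts_cong)
  have cycle_H: "is_cycle H C" using is_cycle_transfer[OF cycle C_edges same_ends] .
  have two_ends: "\<forall>f\<in>C. card (ends H f) = 2" using wf C_edges unfolding wf_graph_def by blast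
  obtain N where N: "perfect_matching (delete_verts H (edge_verts H C)) N"
    using ce cycle_H even unfolding cycle_extendable_def even_cycle_def by blast
  obtain e where "e \<in> C" using \<open>C \<noteq> {}\<close> by blast
  have "\<exists>F\<subseteq>C. e \<in> F \<and> covers_once H F (edge_verts H C)"
    by (rule even_cycle_covers_once) (use cycle_H even two_ends \<open>e \<in> C\<close> in \<open>simp_all add: even_cycle_def\<close>)
  then obtain F where F: "F \<subseteq> C" "covers_once H F (edge_verts H C)" by blast
  have "perfect_matching H (N \<union> F)"
  proof (rule perfect_matching_union[OF N])
    show "F \<subseteq> edges H" using F(1) C_edges by blast
    show "\<forall>f\<in>F. ends H f \<subseteq> edge_verts H C" using F(1) ends_subset_edge_verts[of _ C H] by blast
  qed (rule F(2))
  moreover have "F \<inter> cut H X = {}" using F(1) avoid crossing_iff by blast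
  ultimately have "card (N \<inter> cut H X) = 1" using one_crossing by (metis Int_Un_distrib2 sup_bot_right)
  moreover have "edge_verts H C \<subseteq> verts H - X"
    using avoid wf C_edges unfolding wf_graph_def edge_verts_def by blast
  ultimately show ?thesis using perfect_matching_S_one_crossing[OF N] same_verts by auto
qed

end

section \<open>Even cycles through the shrunk vertex\<close>

locale shrink_cycle_through = tight_shrink +
  fixes C e1 e2 a1 a2 b1 b2 M M'
  assumes cycle: "is_cycle S C"
    and at_x: "{f\<in>C. x \<in> ends S f} = {e1, e2}" and e1_ne_e2: "e1 \<noteq> e2"
    and e1: "ends H e1 = {a1, b1}" "a1 \<in> X" "b1 \<notin> X"
    and e2: "ends H e2 = {a2, b2}" "a2 \<in> X" "b2 \<notin> X"
    and M: "perfect_matching H M" "M \<inter> cut H X = {e1}"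
    and M': "perfect_matching H M'" "M' \<inter> cut H X = {e2}"
begin

text \<open>The component Q of K containing a1 is the even cycle of H that extends C through X.\<close>

definition alternating where
  "alternating = {f \<in> edges H. ends H f \<subseteq> X \<and> (f \<in> M) \<noteq> (f \<in> M')}"

definition K where
  "K = C \<union> alternating"

text \<open>side N e a: N is one of M, M', e its crossing edge and a the end of e in X; this lets
  the arguments symmetric in M and M' be stated once.\<close>

definition side where
  "side N e a \<longleftrightarrow> (N, e, a) = (M, e1, a1) \<or> (N, e, a) = (M', e2, a2)"

lemma C_edges: "C \<subseteq> edges H"
  using cycle unfolding is_cycle_def edges_S by auto

lemma K_edges: "K \<subseteq> edges H"
  using C_edges unfolding K_def alternating_def by auto

lemma e1_in_C: "e1 \<in> C" and e2_in_C: "e2 \<in> C"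
  using at_x by auto

lemma x_in_verts_C: "x \<in> edge_verts S C"
  using at_x ends_subset_edge_verts[of e1 C S] by auto

lemma e1_crossing: "e1 \<in> cut H X" and e2_crossing: "e2 \<in> cut H X"
  using M(2) M'(2) by auto

lemma e1_notin_M': "e1 \<notin> M'" and e2_notin_M: "e2 \<notin> M"
  using M(2) M'(2) e1_crossing e2_crossing e1_ne_e2 by auto

lemma sideD:
  assumes "side N e a"
  shows "perfect_matching H N" "N \<inter> cut H X = {e}" "e \<in> C" "ends H e \<inter> X = {a}" "N = M \<or> N = M'"
  using assms M M' e1 e2 e1_in_C e2_in_C unfolding side_def by auto

lemma C_meets_X:
  assumes "f \<in> C" "v \<in> ends H f" "v \<in> X"
  shows "(f = e1 \<and> v = a1) \<or> (f = e2 \<and> v = a2)"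
proof -
  have "f \<in> {f\<in>C. x \<in> ends S f}" using assms x_mem_ends_S by auto
  then show ?thesis using at_x assms(2,3) e1 e2 by auto
qed

lemma C_crossing: "f \<in> C \<Longrightarrow> v \<in> ends H f \<Longrightarrow> v \<in> X \<Longrightarrow> f \<in> cut H X"
  using C_meets_X e1_crossing e2_crossing by blast

lemma C_avoids_X: "f \<in> C \<Longrightarrow> f \<noteq> e1 \<Longrightarrow> f \<noteq> e2 \<Longrightarrow> ends H f \<inter> X = {}"
  using C_meets_X by blast

lemma K_edges_at_X:
  assumes v: "v \<in> X" and f: "f \<in> K" "v \<in> ends H f"
    and m: "m \<in> M" "v \<in> ends H m" and m': "m' \<in> M'" "v \<in> ends H m'"
  shows "f = m \<or> f = m'"
proof (cases "f \<in> C")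
  case True
  then have "(f = e1 \<and> v = a1) \<or> (f = e2 \<and> v = a2)" using C_meets_X f(2) v by blast
  then show ?thesis
    using matching_unique[OF M(1) v] matching_unique[OF M'(1) v] M(2) M'(2) m m' f(2) by blast
next
  case False
  then have "f \<in> M \<or> f \<in> M'" using f(1) unfolding K_def alternating_def by auto
  then show ?thesis using matching_unique[OF M(1) v] matching_unique[OF M'(1) v] m m' f(2) by blast
qed

lemma matching_edge_in_K:
  assumes side: "side N e a" and v: "v \<in> X" "v \<in> edge_verts H K" and n: "n \<in> N" "v \<in> ends H n"
  shows "n \<in> K"
proof (cases "v = a")
  case True
  then have "n = e" using sideD[OF side] matching_unique v(1) n by blast
  then show ?thesis using sideD(3)[OF side] unfolding K_def by simp
next
  case False
  have N: "perfect_matching H N" "N \<inter> cut H X = {e}" using sideD[OF side] by auto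
  have "n \<noteq> e" using False sideD(4)[OF side] n(2) v(1) by blast
  moreover have "n \<in> edges H" using N(1) n(1) unfolding perfect_matching_def by blast
  ultimately have inside: "ends H n \<subseteq> X" using N(2) n v(1) crossing_iff by blast
  show ?thesis
  proof (cases "n \<in> M \<and> n \<in> M'")
    case True
    obtain f where f: "f \<in> K" "v \<in> ends H f" using v(2) unfolding edge_verts_def by blast
    then show ?thesis using K_edges_at_X[OF v(1) f] True n(2) by blast
  next
    case False
    then have "n \<in> alternating"
      using inside \<open>n \<in> edges H\<close> n(1) sideD(5)[OF side] unfolding alternating_def by auto
    then show ?thesis unfolding K_def by simp
  qed
qed

lemma side_M: "side M e1 a1" and side_M': "side M' e2 a2"
  unfolding side_def by simp_all

lemma K_degree:
  assumes v: "v \<in> edge_verts H K"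
  shows "card {f\<in>K. v \<in> ends H f} = 2"
proof (cases "v \<in> X")
  case False
  have "{f\<in>K. v \<in> ends H f} = {f\<in>C. v \<in> ends S f}"
    using False mem_ends_S_outside unfolding K_def alternating_def by auto
  moreover have "v \<in> edge_verts S C"
    using v False mem_ends_S_outside unfolding K_def alternating_def edge_verts_def by auto
  ultimately show ?thesis using cycle unfolding is_cycle_def by simp
next
  case True
  obtain m where m: "m \<in> M" "v \<in> ends H m" using M(1) True by (rule matching_edge_at_X)
  obtain m' where m': "m' \<in> M'" "v \<in> ends H m'" using M'(1) True by (rule matching_edge_at_X)
  have "m \<in> K" "m' \<in> K"
    using matching_edge_in_K[OF side_M True v m] matching_edge_in_K[OF side_M' True v m'] by auto
  then have "{f\<in>K. v \<in> ends H f} = {m, m'}" using K_edges_at_X[OF True _ _ m m'] m(2) m'(2) by auto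
  moreover have "m \<noteq> m'"
  proof
    assume "m = m'"
    then have "m \<notin> alternating" using m(1) m'(1) unfolding alternating_def by simp
    then have "m \<in> C" using \<open>m \<in> K\<close> unfolding K_def by simp
    then show False using C_meets_X[OF _ m(2) True] \<open>m = m'\<close> m(1) m'(1) e1_notin_M' e2_notin_M by blast
  qed
  ultimately show ?thesis by simp
qed

definition reach where
  "reach = {y. (a1, y) \<in> (edge_rel (ends H) K)\<^sup>*}"

definition Q where
  "Q = {f \<in> K. ends H f \<subseteq> reach}"

definition matched_part where
  "matched_part N = {n \<in> N \<inter> alternating. ends H n \<subseteq> reach}"

lemma a1_in_reach: "a1 \<in> reach"
  unfolding reach_def by simp

lemma reach_closed:
  assumes "f \<in> K" "ends H f \<inter> reach \<noteq> {}"
  shows "ends H f \<subseteq> reach"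
proof -
  obtain p q where pq: "ends H f = {p, q}" "p \<noteq> q" "p \<in> verts H" "q \<in> verts H"
    using wf K_edges assms(1) by (meson subsetD wf_graph_edgeE)
  then have "(p, q) \<in> edge_rel (ends H) K" "(q, p) \<in> edge_rel (ends H) K"
    using assms(1) unfolding edge_rel_iff by (auto simp: insert_commute)
  then show ?thesis using assms(2) pq(1) unfolding reach_def by (auto intro: rtrancl_into_rtrancl)
qed

lemma reach_subset_verts_K: "reach \<subseteq> edge_verts H K"
proof
  fix v assume "v \<in> reach"
  then have "(a1, v) \<in> (edge_rel (ends H) K)\<^sup>*" unfolding reach_def by simp
  then show "v \<in> edge_verts H K"
  proof (cases rule: rtranclE)
    case base
    then show ?thesis using e1 e1_in_C ends_subset_edge_verts[of e1 K H] unfolding K_def by auto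
  next
    case (step y)
    then show ?thesis unfolding edge_rel_iff edge_verts_def by blast
  qed
qed

lemma verts_Q: "edge_verts H Q = reach"
proof
  show "edge_verts H Q \<subseteq> reach" unfolding edge_verts_def Q_def by blast
  show "reach \<subseteq> edge_verts H Q"
  proof
    fix v assume v: "v \<in> reach"
    then obtain f where f: "f \<in> K" "v \<in> ends H f"
      using reach_subset_verts_K unfolding edge_verts_def by blast
    then have "f \<in> Q" using reach_closed v unfolding Q_def by blast
    then show "v \<in> edge_verts H Q" using f(2) unfolding edge_verts_def by blast
  qed
qed

lemma Q_edges_at: "v \<in> reach \<Longrightarrow> {f\<in>Q. v \<in> ends H f} = {f\<in>K. v \<in> ends H f}"
  using reach_closed unfolding Q_def by blast

lemma Q_connected: "connected_via (edge_verts H Q) Q (ends H)"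
  unfolding connected_via_iff_edge_rel verts_Q
proof (intro ballI)
  have from_a1: "(a1, v) \<in> (edge_rel (ends H) Q)\<^sup>*" if "v \<in> reach" for v
  proof -
    have "(a1, v) \<in> (edge_rel (ends H) K)\<^sup>*" using that unfolding reach_def by simp
    then show ?thesis
    proof induction
      case (step y z)
      then obtain f where f: "f \<in> K" "ends H f = {y, z}" unfolding edge_rel_iff by blast
      have "y \<in> reach" using step(1) unfolding reach_def by simp
      then have "f \<in> Q" using reach_closed f unfolding Q_def by blast
      then have "(y, z) \<in> edge_rel (ends H) Q" using f(2) unfolding edge_rel_iff by blast
      with step(3) show ?case by (rule rtrancl_into_rtrancl)
    qed simp
  qed
  fix u v assume "u \<in> reach" "v \<in> reach"
  then have "(u, a1) \<in> (edge_rel (ends H) Q)\<^sup>*" "(a1, v) \<in> (edge_rel (ends H) Q)\<^sup>*"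
    using symD[OF sym_rtrancl[OF sym_edge_rel] from_a1] from_a1 by auto
  then show "(u, v) \<in> (edge_rel (ends H) Q)\<^sup>*" by (rule rtrancl_trans)
qed

lemma Q_cycle: "is_cycle H Q"
  unfolding is_cycle_def
proof (intro conjI ballI)
  show "Q \<subseteq> edges H" using K_edges unfolding Q_def by blast
  then show "finite Q" using wf finite_subset unfolding wf_graph_def by blast
  show "Q \<noteq> {}" using e1 e1_in_C reach_closed[of e1] a1_in_reach unfolding Q_def K_def by blast
  show "connected_via (edge_verts H Q) Q (ends H)" by (rule Q_connected)
  fix v assume "v \<in> edge_verts H Q"
  then show "card {f\<in>Q. v \<in> ends H f} = 2"
    using Q_edges_at K_degree reach_subset_verts_K unfolding verts_Q by auto
qed

lemma matched_part_covers:
  assumes side: "side N e a"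
  shows "covers_once H (matched_part N) (reach \<inter> X - {a})"
  unfolding covers_once_def
proof
  fix v assume v: "v \<in> reach \<inter> X - {a}"
  obtain n where n: "n \<in> N" "v \<in> ends H n"
    using sideD(1)[OF side] v by (meson Diff_iff Int_iff matching_edge_at_X)
  have "n \<in> K" using matching_edge_in_K[OF side _ _ n] v reach_subset_verts_K by blast
  moreover have "n \<notin> C"
  proof
    assume "n \<in> C"
    then have "n \<in> N \<inter> cut H X" using C_crossing n v by blast
    then have "n = e" using sideD(2)[OF side] by blast
    then show False using sideD(4)[OF side] n(2) v by blast
  qed
  ultimately have "n \<in> matched_part N"
    using reach_closed[of n] n v unfolding matched_part_def K_def by blast
  moreover have "n' = n" if "n' \<in> matched_part N" "v \<in> ends H n'" for n'
    using that matching_unique[OF sideD(1)[OF side]] n v unfolding matched_part_def by blast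
  ultimately show "\<exists>!n. n \<in> matched_part N \<and> v \<in> ends H n" using n(2) by (intro ex1I[of _ n]) blast+
qed

lemma even_card_reach_X_minus:
  assumes side: "side N e a"
  shows "even (card (reach \<inter> X - {a}))"
proof -
  have "matched_part N \<subseteq> edges H"
    using sideD(1)[OF side] unfolding matched_part_def perfect_matching_def by blast
  then have fin_F: "finite (matched_part N)" using wf finite_subset unfolding wf_graph_def by blast
  have fin_W: "finite (reach \<inter> X - {a})" using X_subset wf finite_subset unfolding wf_graph_def by blast
  have ends: "\<forall>n\<in>matched_part N. card (ends H n) = 2 \<and> ends H n \<subseteq> reach \<inter> X - {a}"
  proof
    fix n assume n: "n \<in> matched_part N"
    have "a \<notin> ends H n"
    proof
      assume "a \<in> ends H n"
      then have "n = e"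
        using matching_unique[OF sideD(1)[OF side]] sideD(2,4)[OF side] n unfolding matched_part_def by blast
      then show False using n sideD(2)[OF side] crossing_iff unfolding matched_part_def alternating_def by blast
    qed
    then show "card (ends H n) = 2 \<and> ends H n \<subseteq> reach \<inter> X - {a}"
      using n wf unfolding matched_part_def alternating_def wf_graph_def by auto
  qed
  have "card (reach \<inter> X - {a}) = 2 * card (matched_part N)"
    using card_covers_once[OF fin_W fin_F ends matched_part_covers[OF side]] .
  then show ?thesis by simp
qed

text \<open>Parity: the M-edges of Q inside X match the vertices of reach \<inter> X except a1, and the
  M'-edges those except a2.\<close>

lemma a2_in_reach: "a2 \<in> reach"
proof (rule ccontr)
  assume "a2 \<notin> reach"
  then have "even (card (reach \<inter> X))" using even_card_reach_X_minus[OF side_M'] by simp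
  moreover have "even (card (reach \<inter> X - {a1}))" by (rule even_card_reach_X_minus[OF side_M])
  moreover have "finite (reach \<inter> X)" using X_subset wf finite_subset unfolding wf_graph_def by blast
  moreover have "a1 \<in> reach \<inter> X" using a1_in_reach e1(2) by simp
  ultimately have "even (card (reach \<inter> X))" "even (card (reach \<inter> X) - 1)" "card (reach \<inter> X) > 0"
    by (auto simp: card_gt_0_iff)
  then show False by presburger
qed

lemma b1_in_reach: "b1 \<in> reach" and b2_in_reach: "b2 \<in> reach"
  using reach_closed[of e1] reach_closed[of e2] e1 e2 e1_in_C e2_in_C a1_in_reach a2_in_reach
  unfolding K_def by auto

lemma ends_S_e1: "ends S e1 = {x, b1}" and ends_S_e2: "ends S e2 = {x, b2}"
  using e1 e2 unfolding ends_S collapse_def by auto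

lemma verts_C_subset_reach: "edge_verts S C \<subseteq> insert x reach"
proof (rule cycle_verts_closed[OF cycle _ x_in_verts_C])
  fix f assume f: "f \<in> C" "ends S f \<inter> insert x reach \<noteq> {}"
  consider "f = e1" | "f = e2" | "f \<noteq> e1" "f \<noteq> e2" by blast
  then show "ends S f \<subseteq> insert x reach"
  proof cases
    case 3
    then have "ends H f \<inter> X = {}" using C_avoids_X f(1) by blast
    then have "ends S f = ends H f" "x \<notin> ends H f"
      using collapse_image_disjoint x_in_X unfolding ends_S by auto
    then show ?thesis using reach_closed[of f] f unfolding K_def by auto
  qed (use ends_S_e1 ends_S_e2 b1_in_reach b2_in_reach in auto)
qed simp

lemma C_subset_Q: "C \<subseteq> Q"
proof
  fix f assume f: "f \<in> C"
  have "ends H f \<subseteq> reach"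
  proof (cases "f = e1 \<or> f = e2")
    case True
    then show ?thesis using e1 e2 a1_in_reach a2_in_reach b1_in_reach b2_in_reach by auto
  next
    case False
    then have "ends H f \<inter> X = {}" using C_avoids_X f by blast
    then have "ends H f \<subseteq> edge_verts S C" "x \<notin> ends H f"
      using f ends_subset_edge_verts[of f C S] collapse_image_disjoint x_in_X unfolding ends_S by auto
    then show ?thesis using verts_C_subset_reach by blast
  qed
  then show "f \<in> Q" using f unfolding Q_def K_def by blast
qed

lemma reach_outside_X: "reach - X = edge_verts S C - {x}"
proof
  show "reach - X \<subseteq> edge_verts S C - {x}"
  proof
    fix v assume v: "v \<in> reach - X"
    then obtain f where f: "f \<in> K" "v \<in> ends H f"
      using reach_subset_verts_K unfolding edge_verts_def by blast
    then have "f \<in> C" using v unfolding K_def alternating_def by blast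
    then show "v \<in> edge_verts S C - {x}"
      using f(2) v mem_ends_S_outside x_in_X ends_subset_edge_verts[of f C S] by auto
  qed
  show "edge_verts S C - {x} \<subseteq> reach - X"
  proof
    fix v assume v: "v \<in> edge_verts S C - {x}"
    then have "v \<notin> X" using not_in_X_if_mem_ends_S unfolding edge_verts_def by blast
    then show "v \<in> reach - X" using v verts_C_subset_reach by blast
  qed
qed

context
  fixes F assumes F: "F \<subseteq> C" "e1 \<in> F" "covers_once S F (edge_verts S C)"
begin

lemma e2_notin_F: "e2 \<notin> F"
  using covers_once_unique[OF F(3) x_in_verts_C] F(2) ends_S_e1 ends_S_e2 e1_ne_e2 by blast

lemma edge_at_a1:
  assumes "f \<in> F \<union> matched_part M" "a1 \<in> ends H f"
  shows "f = e1"
proof (cases "f \<in> F")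
  case True
  then have "x \<in> ends S f" using assms(2) e1(2) x_mem_ends_S by blast
  then show ?thesis using covers_once_unique[OF F(3) x_in_verts_C] True F(2) ends_S_e1 by blast
next
  case False
  then have "f \<in> M" using assms(1) unfolding matched_part_def by blast
  then show ?thesis using matching_unique[OF M(1) e1(2)] assms(2) M(2) e1(1) by blast
qed

lemma covers_once_Q: "covers_once H (F \<union> matched_part M) reach"
  unfolding covers_once_def
proof
  fix v assume v: "v \<in> reach"
  show "\<exists>!f. f \<in> F \<union> matched_part M \<and> v \<in> ends H f"
  proof (cases "v \<in> X")
    case False
    then have "v \<in> edge_verts S C" using v reach_outside_X by blast
    then obtain f where f: "f \<in> F" "v \<in> ends S f" "\<And>f'. f' \<in> F \<Longrightarrow> v \<in> ends S f' \<Longrightarrow> f' = f"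
      by (rule covers_onceE[OF F(3)]) blast
    moreover have "v \<notin> ends H n" if "n \<in> matched_part M" for n
      using that False unfolding matched_part_def alternating_def by blast
    ultimately show ?thesis using mem_ends_S_outside[OF False] by (intro ex1I[of _ f]) blast+
  next
    case True
    show ?thesis
    proof (cases "v = a1")
      case True
      then show ?thesis using edge_at_a1 F(2) e1(1) by (intro ex1I[of _ e1]) blast+
    next
      case False
      then have "v \<in> reach \<inter> X - {a1}" using v \<open>v \<in> X\<close> by blast
      then obtain n where n: "n \<in> matched_part M" "v \<in> ends H n"
        "\<And>n'. n' \<in> matched_part M \<Longrightarrow> v \<in> ends H n' \<Longrightarrow> n' = n"
        by (rule covers_onceE[OF matched_part_covers[OF side_M]]) blast
      moreover have "v \<notin> ends H f" if "f \<in> F" for f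
        using that C_meets_X[of f v] F(1) e2_notin_F False \<open>v \<in> X\<close> by blast
      ultimately show ?thesis by (intro ex1I[of _ n]) blast+
    qed
  qed
qed

lemma even_cycle_Q: "even_cycle H Q"
proof -
  have "F \<union> matched_part M \<subseteq> Q" using F(1) C_subset_Q unfolding matched_part_def Q_def K_def by blast
  moreover have "\<forall>f\<in>Q. card (ends H f) = 2" using Q_cycle wf unfolding is_cycle_def wf_graph_def by blast
  ultimately have "even (card Q)"
    using cycle_even_if_covers_once[OF Q_cycle] covers_once_Q unfolding verts_Q by blast
  then show ?thesis using Q_cycle unfolding even_cycle_def by simp
qed

lemma perfect_matching_delete_C:
  assumes "cycle_extendable H"
  shows "\<exists>N. perfect_matching (delete_verts S (edge_verts S C)) N"
proof -
  obtain N where N: "perfect_matching (delete_verts H reach) N"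
    using assms even_cycle_Q verts_Q unfolding cycle_extendable_def by metis
  have "perfect_matching H (N \<union> (F \<union> matched_part M))"
  proof (rule perfect_matching_union[OF N _ _ covers_once_Q])
    show "F \<union> matched_part M \<subseteq> edges H" using F(1) C_edges M(1)
      unfolding matched_part_def perfect_matching_def by blast
    show "\<forall>f\<in>F \<union> matched_part M. ends H f \<subseteq> reach"
      using F(1) C_subset_Q unfolding matched_part_def Q_def by blast
  qed
  then obtain c where c: "(N \<union> (F \<union> matched_part M)) \<inter> cut H X = {c}"
    using one_crossing card_1_singletonE by blast
  moreover have "e1 \<in> (N \<union> (F \<union> matched_part M)) \<inter> cut H X" using F(2) e1_crossing by blast
  ultimately have "N \<inter> cut H X \<subseteq> {e1}" by auto
  moreover have "e1 \<notin> N"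
    using N a1_in_reach e1(1) unfolding perfect_matching_delete_verts_iff by blast
  ultimately have "N \<inter> cut H X = {}" by blast
  then have "perfect_matching (delete_verts S (insert x (reach - X))) (N \<inter> edges S)"
    by (rule perfect_matching_S_no_crossing[OF N])
  moreover have "insert x (reach - X) = edge_verts S C" using reach_outside_X x_in_verts_C by auto
  ultimately show ?thesis by auto
qed

end

end

section \<open>Tight cut decompositions\<close>

context tight_shrink
begin

lemma shrink_cycle_through_x:
  assumes ce: "cycle_extendable H" and C: "even_cycle S C" and x_in: "x \<in> edge_verts S C"
  shows "\<exists>N. perfect_matching (delete_verts S (edge_verts S C)) N"
proof -
  have mc: "matching_covered H" using ce unfolding cycle_extendable_def by simp
  have cycle: "is_cycle S C" using C unfolding even_cycle_def by simp
  then have "card {f\<in>C. x \<in> ends S f} = 2" using x_in unfolding is_cycle_def by blast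
  then obtain e1 e2 where at_x: "{f\<in>C. x \<in> ends S f} = {e1, e2}" and "e1 \<noteq> e2"
    by (meson card_2_iff)
  have crossing: "e \<in> cut H X" if "e \<in> {e1, e2}" for e
  proof -
    have "e \<in> C" "x \<in> ends S e" using at_x that by auto
    then show ?thesis using cycle x_mem_ends_S crossing_iff unfolding is_cycle_def edges_S by blast
  qed
  then have "e1 \<in> cut H X" "e2 \<in> cut H X" by simp_all
  obtain a1 b1 where e1: "ends H e1 = {a1, b1}" "a1 \<in> X" "b1 \<notin> X"
    using \<open>e1 \<in> cut H X\<close> by (rule crossing_edgeE)
  obtain a2 b2 where e2: "ends H e2 = {a2, b2}" "a2 \<in> X" "b2 \<notin> X"
    using \<open>e2 \<in> cut H X\<close> by (rule crossing_edgeE)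
  obtain M where M: "perfect_matching H M" "M \<inter> cut H X = {e1}"
    using mc \<open>e1 \<in> cut H X\<close> by (rule matching_through_crossing)
  obtain M' where M': "perfect_matching H M'" "M' \<inter> cut H X = {e2}"
    using mc \<open>e2 \<in> cut H X\<close> by (rule matching_through_crossing)
  interpret shrink_cycle_through H X x C e1 e2 a1 a2 b1 b2 M M'
    by unfold_locales (fact cycle at_x \<open>e1 \<noteq> e2\<close> e1 e2 M M')+
  have "\<forall>f\<in>C. card (ends S f) = 2" using wf_S C_edges cycle unfolding wf_graph_def is_cycle_def by blast
  then have "\<exists>F\<subseteq>C. e1 \<in> F \<and> covers_once S F (edge_verts S C)"
    using even_cycle_covers_once[OF C] e1_in_C by blast
  then obtain F where "F \<subseteq> C" "e1 \<in> F" "covers_once S F (edge_verts S C)" by blast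
  then show ?thesis using perfect_matching_delete_C ce by blast
qed

lemma cycle_extendable_S:
  assumes "cycle_extendable H"
  shows "cycle_extendable S"
  unfolding cycle_extendable_def
proof (intro conjI allI impI)
  show "matching_covered S" using assms matching_covered_S unfolding cycle_extendable_def by blast
  fix C assume "even_cycle S C"
  then show "\<exists>N. perfect_matching (delete_verts S (edge_verts S C)) N"
    using assms shrink_cycle_avoiding_x shrink_cycle_through_x by blast
qed

end

lemma cycle_extendable_shrink:
  assumes "cycle_extendable H" "tight_cut H X" "x \<in> X" "verts H - X \<noteq> {}"
  shows "cycle_extendable (shrink H X x)"
proof -
  have "wf_graph H" using assms(1) unfolding cycle_extendable_def matching_covered_def by simp
  then interpret tight_shrink H X x using assms(2-4) by unfold_locales
  show ?thesis using cycle_extendable_S assms(1) .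
qed

lemma tc_piece_cycle_extendable:
  assumes "tc_piece G H" "cycle_extendable G"
  shows "cycle_extendable H"
  using assms
proof (induction rule: tc_piece.induct)
  case (split1 H X x)
  have tight: "tight_cut H X" and "card (verts H - X) \<ge> 2"
    using split1(2) unfolding nontrivial_tight_cut_def by auto
  then have "verts H - X \<noteq> {}" by (metis card.empty not_numeral_le_zero)
  with split1 tight show ?case by (intro cycle_extendable_shrink) auto
next
  case (split2 H X y)
  then have wf: "wf_graph H" unfolding cycle_extendable_def matching_covered_def by simp
  have tight: "tight_cut H X" and "card X \<ge> 2"
    using split2(2) unfolding nontrivial_tight_cut_def by auto
  then have "verts H - (verts H - X) \<noteq> {}"
    using tight unfolding tight_cut_def by (metis Diff_Diff_Int card.empty inf.absorb_iff2 not_numeral_le_zero)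
  with split2 tight_cut_complement[OF wf tight] show ?case by (intro cycle_extendable_shrink) auto
qed simp

theorem corollary2p5:
  fixes G H :: "('v, 'e) mgraph"
  assumes "cycle_extendable G"
    and "is_brick G H \<or> is_brace G H"
  shows "cycle_extendable H"
proof -
  have "tc_piece G H" using assms(2) unfolding is_brick_def is_brace_def by blast
  then show ?thesis using tc_piece_cycle_extendable assms(1) by blast
qed

end
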